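(* Let $\mathcal{Q}$ be a quantum query algorithm making $p(n)$ queries to an oracle acting on an $n$-qubit query register, and fix an initial state. For an $n$-qubit pure state $|\psi\rangle$, let $|\Phi^f_\psi\rangle$ be the final state (before measurement) of $\mathcal{Q}$ run from this initial state with oracle $U_\psi=\mathbb{1}-2|\psi\rangle\langle\psi|$. Then there exists a subspace $S$ of the $n$-qubit Hilbert space of dimension $2^{n/2}$ containing $|\psi\rangle$ such that, if $|\Phi^f_S\rangle$ is the final state of $\mathcal{Q}$ run from the same initial state with oracle $U_S=\mathbb{1}-2\Pi_S$ ($\Pi_S$ the orthogonal projector onto $S$), then $\big\||\Phi^f_\psi\rangle-|\Phi^f_S\rangle\big\|_2\le 2p(n)\cdot2^{-n/6}$.
   Context: A quantum query algorithm alternates fixed unitaries on its registers with applications of the oracle to a designated $n$-qubit query register (tensored with identity elsewhere). $n$ is assumed even. *)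

theory Defs
  imports Complex_Main "Jordan_Normal_Form.Matrix"
begin

text \<open>The full system consists of an n-qubit query register (dimension 2^n) and a
 w-qubit workspace (dimension 2^w); a basis index k of the full system
 corresponds to query index k div 2^w and workspace index k mod 2^w,
 i.e. the full space is the tensor product (query register) (x) (workspace).\<close>

definition cinner :: "complex vec \<Rightarrow> complex vec \<Rightarrow> complex" where
  "cinner u v = (\<Sum>i<dim_vec v. cnj (u $ i) * v $ i)"

definition vnorm :: "complex vec \<Rightarrow> real" where
  "vnorm v = sqrt (\<Sum>i<dim_vec v. (cmod (v $ i))\<^sup>2)"

definition adjoint_mat :: "complex mat \<Rightarrow> complex mat" where
  "adjoint_mat U = mat (dim_col U) (dim_row U) (\<lambda>(i,j). cnj (U $$ (j,i)))"

definition unitary_mat :: "nat \<Rightarrow> complex mat \<Rightarrow> bool" where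
  "unitary_mat d U \<longleftrightarrow> U \<in> carrier_mat d d \<and> U * adjoint_mat U = 1\<^sub>m d \<and> adjoint_mat U * U = 1\<^sub>m d"

definition proj_onto :: "nat \<Rightarrow> complex vec list \<Rightarrow> complex mat" where
  "proj_onto d bs = mat d d (\<lambda>(i,j). (\<Sum>b\<leftarrow>bs. b $ i * cnj (b $ j)))"

definition orthonormal_list :: "nat \<Rightarrow> complex vec list \<Rightarrow> bool" where
  "orthonormal_list d bs \<longleftrightarrow> (\<forall>b\<in>set bs. dim_vec b = d) \<and>
     (\<forall>k<length bs. \<forall>l<length bs. cinner (bs ! k) (bs ! l) = (if k = l then 1 else 0))"

definition in_span :: "complex vec \<Rightarrow> complex vec list \<Rightarrow> bool" where
  "in_span v bs \<longleftrightarrow> (\<exists>c :: nat \<Rightarrow> complex. \<forall>i<dim_vec v. v $ i = (\<Sum>k<length bs. c k * (bs ! k) $ i))"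

definition refl_oracle :: "nat \<Rightarrow> complex vec list \<Rightarrow> complex mat" where
  "refl_oracle d bs = 1\<^sub>m d - 2 \<cdot>\<^sub>m proj_onto d bs"

definition state_oracle :: "nat \<Rightarrow> complex vec \<Rightarrow> complex mat" where
  "state_oracle d \<psi> = refl_oracle d [\<psi>]"

text \<open>Oracle O on the n-qubit query register, tensored with the identity on the
 w-qubit workspace.\<close>
definition lift_oracle :: "nat \<Rightarrow> nat \<Rightarrow> complex mat \<Rightarrow> complex mat" where
  "lift_oracle n w Orc = mat (2^n * 2^w) (2^n * 2^w)
     (\<lambda>(i,j). if i mod 2^w = j mod 2^w then Orc $$ (i div 2^w, j div 2^w) else 0)"

text \<open>Running the algorithm: after the first unitary, each subsequent unitary is
 preceded by one oracle call. With unitaries U0 and Us the algorithm makes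
 length Us queries.\<close>
fun run_alg :: "complex mat \<Rightarrow> complex mat list \<Rightarrow> complex vec \<Rightarrow> complex vec" where
  "run_alg Oe [] x = x"
| "run_alg Oe (U # Us) x = run_alg Oe Us (U *\<^sub>v (Oe *\<^sub>v x))"

definition final_state :: "nat \<Rightarrow> nat \<Rightarrow> complex mat \<Rightarrow> complex mat list \<Rightarrow> complex mat \<Rightarrow> complex vec \<Rightarrow> complex vec" where
  "final_state n w U0 Us Orc init = run_alg (lift_oracle n w Orc) Us (U0 *\<^sub>v init)"

end

theory Submission
  imports Defs "HOL-Analysis.L2_Norm"
begin

(* Extend \<psi> to an orthonormal basis \<psi>, b_1, ..., b_(N-1) of C^N, where N = 2^n = D^2 with
   D = 2^(n/2), and split b_1, ..., b_(N-1) into D + 1 blocks G_m of D - 1 vectors; the candidate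
   subspaces are S_m = span (\<psi>, G_m).  Since U_\<psi> - U_(S_m) = 2 \<Pi>_(G_m), the hybrid argument bounds
   the distance of the final states by 2 \<Sigma>_t |(\<Pi>_(G_m) \<otimes> 1) \<phi>_t|, summed over the states \<phi>_t
   queried in the run with U_\<psi>.  By Bessel's inequality the squared weights |(\<Pi>_(G_m) \<otimes> 1) \<phi>_t|^2
   sum over m to at most |\<phi>_t|^2 = 1, so some block has total weight at most p / (D + 1), and
   Cauchy-Schwarz bounds the distance by 2 p / sqrt (D + 1) \<le> 2 p 2^(-n/4) \<le> 2 p 2^(-n/6). *)

lemma sum_lessThan_mult_split: "(\<Sum>k<N * W. g k) = (\<Sum>i<N. \<Sum>j<W. g (i * W + j))" for N W :: nat
proof -
  have "(\<Sum>k<N * W. g k) = (\<Sum>i<N. sum g {i * W..<i * W + W})"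
    using sum.nat_group[of g W N] by simp
  also have "\<dots> = (\<Sum>i<N. \<Sum>j<W. g (i * W + j))"
    by (simp add: sum.shift_bounds_nat_ivl[of g 0 "i * W" W for i, simplified] atLeast0LessThan add.commute)
  finally show ?thesis .
qed

lemma vnorm_nonneg: "0 \<le> vnorm v"
  unfolding vnorm_def by (simp add: sum_nonneg)

lemma vnorm_sq: "(vnorm v)\<^sup>2 = (\<Sum>i<dim_vec v. (cmod (v $ i))\<^sup>2)"
  unfolding vnorm_def by (simp add: sum_nonneg)

lemma vnorm_smult: "vnorm (c \<cdot>\<^sub>v v) = cmod c * vnorm v"
  unfolding vnorm_def by (simp add: norm_mult power_mult_distrib sum_distrib_left[symmetric] real_sqrt_mult)

lemma cinner_self: "cinner v v = of_real ((vnorm v)\<^sup>2)"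
  unfolding vnorm_sq cinner_def of_real_sum by (simp add: complex_norm_square mult.commute del: of_real_power)

lemma vnorm_eq_iff_cinner_self: "vnorm u = vnorm v \<longleftrightarrow> cinner u u = cinner v v"
  by (metis cinner_self of_real_eq_iff power2_eq_iff_nonneg vnorm_nonneg)

lemma cinner_commute: "dim_vec u = dim_vec v \<Longrightarrow> cinner v u = cnj (cinner u v)"
  unfolding cinner_def by (simp add: mult.commute)

lemma cinner_smult_left: "dim_vec u = dim_vec v \<Longrightarrow> cinner (c \<cdot>\<^sub>v u) v = cnj c * cinner u v"
  unfolding cinner_def by (simp add: sum_distrib_left mult.assoc)

lemma cinner_smult_right: "cinner u (c \<cdot>\<^sub>v v) = c * cinner u v"
  unfolding cinner_def by (simp add: sum_distrib_left mult.left_commute)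

lemma cinner_diff_smult:
  assumes "dim_vec x' = dim_vec y"
  shows "cinner (x - a \<cdot>\<^sub>v y) (x' - b \<cdot>\<^sub>v y) =
    cinner x x' - b * cinner x y - cnj a * cinner y x' + cnj a * b * cinner y y"
  using assms unfolding cinner_def
  by (simp add: algebra_simps sum.distrib sum_subtractf sum_distrib_left)

lemma cinner_unit_vec_left: "k < dim_vec w \<Longrightarrow> cinner (unit_vec (dim_vec w) k) w = w $ k"
  unfolding cinner_def unit_vec_def by (simp add: if_distrib[of cnj] if_distrib[of "\<lambda>x. x * _"] cong: if_cong)

lemma cinner_unit_vec_right: "k < d \<Longrightarrow> cinner w (unit_vec d k) = cnj (w $ k)"
  unfolding cinner_def unit_vec_def by (simp add: if_distrib[of "(*) _"] cong: if_cong)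

lemma vnorm_add_le: "dim_vec x = dim_vec y \<Longrightarrow> vnorm (x + y) \<le> vnorm x + vnorm y"
proof -
  assume dim: "dim_vec x = dim_vec y"
  have vnorm_L2: "vnorm v = L2_set (\<lambda>i. cmod (v $ i)) {..<dim_vec v}" for v
    unfolding vnorm_def L2_set_def ..
  have "vnorm (x + y) = L2_set (\<lambda>i. cmod (x $ i + y $ i)) {..<dim_vec y}"
    unfolding vnorm_L2 using dim by (intro L2_set_cong) auto
  also have "\<dots> \<le> L2_set (\<lambda>i. cmod (x $ i) + cmod (y $ i)) {..<dim_vec y}"
    by (intro L2_set_mono norm_triangle_ineq) auto
  also have "\<dots> \<le> vnorm x + vnorm y"
    unfolding vnorm_L2 dim by (rule L2_set_triangle_ineq)
  finally show ?thesis .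
qed

lemma vnorm_diff_triangle:
  assumes "dim_vec x = d" "dim_vec y = d" "dim_vec z = d"
  shows "vnorm (x - z) \<le> vnorm (x - y) + vnorm (y - z)"
proof -
  have "x - z = (x - y) + (y - z)"
    using assms by (intro eq_vecI) auto
  then show ?thesis
    using assms vnorm_add_le[of "x - y" "y - z"] by simp
qed

lemma unitary_mat_carrier: "unitary_mat d U \<Longrightarrow> U \<in> carrier_mat d d"
  unfolding unitary_mat_def by blast

lemma dim_row_unitary: "unitary_mat d U \<Longrightarrow> dim_row U = d"
  by (rule carrier_matD(1)[OF unitary_mat_carrier])

lemma cinner_mult_vec_unitary:
  assumes U: "unitary_mat d U" and x: "dim_vec x = d"
  shows "cinner (U *\<^sub>v x) (U *\<^sub>v x) = cinner x x"
proof -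
  have carrier: "U \<in> carrier_mat d d" and UU: "adjoint_mat U * U = 1\<^sub>m d"
    using U unfolding unitary_mat_def by auto
  have orth: "(\<Sum>k<d. cnj (U $$ (k, l)) * U $$ (k, l')) = (if l = l' then 1 else 0)"
    if "l < d" "l' < d" for l l'
  proof -
    have "(adjoint_mat U * U) $$ (l, l') = (\<Sum>k<d. cnj (U $$ (k, l)) * U $$ (k, l'))"
      using carrier that unfolding adjoint_mat_def by (simp add: scalar_prod_def atLeast0LessThan)
    then show ?thesis
      using UU that by simp
  qed
  have "cinner (U *\<^sub>v x) (U *\<^sub>v x)
      = (\<Sum>k<d. cnj (\<Sum>l<d. U $$ (k, l) * x $ l) * (\<Sum>l'<d. U $$ (k, l') * x $ l'))"
    using carrier x unfolding cinner_def by (simp add: scalar_prod_def atLeast0LessThan mult.commute)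
  also have "\<dots> = (\<Sum>k<d. \<Sum>l<d. \<Sum>l'<d. cnj (x $ l) * x $ l' * (cnj (U $$ (k, l)) * U $$ (k, l')))"
    by (simp add: sum_distrib_left sum_distrib_right mult_ac)
  also have "\<dots> = (\<Sum>l<d. \<Sum>l'<d. cnj (x $ l) * x $ l' * (\<Sum>k<d. cnj (U $$ (k, l)) * U $$ (k, l')))"
    unfolding sum_distrib_left by (subst sum.swap, rule sum.cong, simp, subst sum.swap, simp)
  also have "\<dots> = cinner x x"
    using x unfolding cinner_def by (simp add: orth if_distrib[of "(*) _"] cong: if_cong)
  finally show ?thesis .
qed

lemma vnorm_mult_vec_unitary: "unitary_mat d U \<Longrightarrow> dim_vec x = d \<Longrightarrow> vnorm (U *\<^sub>v x) = vnorm x"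
  by (simp add: vnorm_eq_iff_cinner_self cinner_mult_vec_unitary)

lemma orthonormal_list_dim: "orthonormal_list d bs \<Longrightarrow> k < length bs \<Longrightarrow> dim_vec (bs ! k) = d"
  unfolding orthonormal_list_def by auto

lemma orthonormal_list_map_nth:
  assumes "orthonormal_list d bs" "distinct ks" "set ks \<subseteq> {..<length bs}"
  shows "orthonormal_list d (map ((!) bs) ks)"
  using assms unfolding orthonormal_list_def
  by (auto simp: subset_iff nth_eq_iff_index_eq)

lemma orthonormal_list_ConsD:
  assumes "orthonormal_list d (b # bs)"
  shows "orthonormal_list d bs"
proof -
  have "orthonormal_list d (map ((!) (b # bs)) (map Suc [0..<length bs]))"
    by (rule orthonormal_list_map_nth[OF assms]) (auto simp: distinct_map)
  then show ?thesis
    by (simp add: comp_def map_nth)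
qed

lemma orthonormal_list_Cons_block:
  assumes "orthonormal_list d (b # bs)" "a + c \<le> length bs"
  shows "orthonormal_list d (b # map ((!) bs) [a..<a + c])"
proof -
  have "orthonormal_list d (map ((!) (b # bs)) (0 # map Suc [a..<a + c]))"
    using assms by (intro orthonormal_list_map_nth) (auto simp: distinct_map)
  then show ?thesis
    by (simp add: comp_def)
qed

lemma orthonormal_list_Cons_smult:
  assumes ortho: "orthonormal_list d (b # bs)" and c: "cnj c * c = 1"
  shows "orthonormal_list d ((c \<cdot>\<^sub>v b) # bs)"
proof -
  define p where "p k = (if k = 0 then c else 1)" for k :: nat
  have nth: "((c \<cdot>\<^sub>v b) # bs) ! k = p k \<cdot>\<^sub>v (b # bs) ! k" for k
    by (cases k) (simp_all add: p_def)
  have "cinner (((c \<cdot>\<^sub>v b) # bs) ! k) (((c \<cdot>\<^sub>v b) # bs) ! l) = (if k = l then 1 else 0)"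
    if "k < Suc (length bs)" "l < Suc (length bs)" for k l
  proof -
    have "cinner (((c \<cdot>\<^sub>v b) # bs) ! k) (((c \<cdot>\<^sub>v b) # bs) ! l)
        = cnj (p k) * p l * cinner ((b # bs) ! k) ((b # bs) ! l)"
      using that orthonormal_list_dim[OF ortho]
      by (simp add: nth cinner_smult_left cinner_smult_right del: nth_Cons_Suc)
    then show ?thesis
      using that ortho c unfolding orthonormal_list_def by (simp add: p_def)
  qed
  then show ?thesis
    using ortho unfolding orthonormal_list_def by auto
qed

lemma in_span_Cons: "in_span b (b # bs)"
  unfolding in_span_def
  by (rule exI[of _ "\<lambda>k. if k = 0 then 1 else 0"]) (simp add: sum.lessThan_Suc_shift del: sum.lessThan_Suc)

definition proj_weight :: "complex vec list \<Rightarrow> complex vec \<Rightarrow> real" where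
  "proj_weight bs v = (\<Sum>k<length bs. (cmod (cinner (bs ! k) v))\<^sup>2)"

lemma proj_weight_nonneg: "0 \<le> proj_weight bs v"
  unfolding proj_weight_def by (simp add: sum_nonneg)

lemma of_real_proj_weight:
  "of_real (proj_weight bs v) = (\<Sum>k<length bs. cnj (cinner (bs ! k) v) * cinner (bs ! k) v)"
  unfolding proj_weight_def of_real_sum by (simp add: complex_norm_square mult.commute del: of_real_power)

lemma dim_row_proj_onto [simp]: "dim_row (proj_onto d bs) = d"
  by (simp add: proj_onto_def)

lemma proj_onto_mult_vec:
  assumes "dim_vec v = d"
  shows "proj_onto d bs *\<^sub>v v = vec d (\<lambda>i. \<Sum>k<length bs. cinner (bs ! k) v * bs ! k $ i)"
proof (rule eq_vecI)
  fix i assume "i < dim_vec (vec d (\<lambda>i. \<Sum>k<length bs. cinner (bs ! k) v * bs ! k $ i))"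
  then have i: "i < d" by simp
  have "(proj_onto d bs *\<^sub>v v) $ i = (\<Sum>j<d. (\<Sum>k<length bs. bs ! k $ i * cnj (bs ! k $ j)) * v $ j)"
    using i assms unfolding proj_onto_def
    by (simp add: scalar_prod_def sum_list_sum_nth atLeast0LessThan)
  also have "\<dots> = (\<Sum>k<length bs. cinner (bs ! k) v * bs ! k $ i)"
    unfolding cinner_def assms sum_distrib_left sum_distrib_right
    by (subst sum.swap) (simp add: mult_ac)
  finally show "(proj_onto d bs *\<^sub>v v) $ i = vec d (\<lambda>i. \<Sum>k<length bs. cinner (bs ! k) v * bs ! k $ i) $ i"
    using i by simp
qed (simp add: proj_onto_def)

context
  fixes d :: nat and bs :: "complex vec list" and v :: "complex vec"
  assumes ortho: "orthonormal_list d bs" and dim_v: "dim_vec v = d"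
begin

lemma cinner_proj_onto_right:
  assumes "dim_vec x = d"
  shows "cinner x (proj_onto d bs *\<^sub>v v) = (\<Sum>k<length bs. cinner (bs ! k) v * cinner x (bs ! k))"
proof -
  define c where "c k = cinner (bs ! k) v" for k
  have "cinner x (proj_onto d bs *\<^sub>v v) = (\<Sum>i<d. cnj (x $ i) * (\<Sum>k<length bs. c k * bs ! k $ i))"
    unfolding proj_onto_mult_vec[OF dim_v] c_def[symmetric] by (simp add: cinner_def)
  also have "\<dots> = (\<Sum>k<length bs. c k * (\<Sum>i<d. cnj (x $ i) * bs ! k $ i))"
    unfolding sum_distrib_left by (subst sum.swap) (simp add: mult_ac)
  also have "\<dots> = (\<Sum>k<length bs. c k * cinner x (bs ! k))"
    using orthonormal_list_dim[OF ortho] by (simp add: cinner_def)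
  finally show ?thesis unfolding c_def .
qed

lemma cinner_proj_onto_left:
  assumes "dim_vec x = d"
  shows "cinner (proj_onto d bs *\<^sub>v v) x = (\<Sum>k<length bs. cnj (cinner (bs ! k) v) * cinner (bs ! k) x)"
proof -
  define c where "c k = cinner (bs ! k) v" for k
  have "cinner (proj_onto d bs *\<^sub>v v) x = (\<Sum>i<d. cnj (\<Sum>k<length bs. c k * bs ! k $ i) * x $ i)"
    unfolding proj_onto_mult_vec[OF dim_v] c_def[symmetric] using assms by (simp add: cinner_def)
  also have "\<dots> = (\<Sum>k<length bs. cnj (c k) * (\<Sum>i<d. cnj (bs ! k $ i) * x $ i))"
    unfolding sum_distrib_left sum_distrib_right cnj_sum by (subst sum.swap) (simp add: mult_ac)
  also have "\<dots> = (\<Sum>k<length bs. cnj (c k) * cinner (bs ! k) x)"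
    using assms by (simp add: cinner_def)
  finally show ?thesis unfolding c_def .
qed

lemma cinner_nth_proj_onto:
  assumes "k < length bs"
  shows "cinner (bs ! k) (proj_onto d bs *\<^sub>v v) = cinner (bs ! k) v"
proof -
  have "cinner (bs ! k) (proj_onto d bs *\<^sub>v v) = (\<Sum>l<length bs. if l = k then cinner (bs ! l) v else 0)"
    unfolding cinner_proj_onto_right[OF orthonormal_list_dim[OF ortho assms]]
    using ortho assms unfolding orthonormal_list_def by (intro sum.cong) auto
  then show ?thesis using assms by simp
qed

lemma cinner_proj_onto_self:
  shows "cinner v (proj_onto d bs *\<^sub>v v) = of_real (proj_weight bs v)"
    and "cinner (proj_onto d bs *\<^sub>v v) v = of_real (proj_weight bs v)"
    and "cinner (proj_onto d bs *\<^sub>v v) (proj_onto d bs *\<^sub>v v) = of_real (proj_weight bs v)"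
proof -
  show "cinner v (proj_onto d bs *\<^sub>v v) = of_real (proj_weight bs v)"
    unfolding cinner_proj_onto_right[OF dim_v] of_real_proj_weight
    using orthonormal_list_dim[OF ortho] dim_v
    by (intro sum.cong) (simp_all add: cinner_commute[of v "bs ! _"] mult.commute)
  show "cinner (proj_onto d bs *\<^sub>v v) v = of_real (proj_weight bs v)"
    unfolding cinner_proj_onto_left[OF dim_v] of_real_proj_weight ..
  show "cinner (proj_onto d bs *\<^sub>v v) (proj_onto d bs *\<^sub>v v) = of_real (proj_weight bs v)"
    unfolding cinner_proj_onto_left[OF dim_mult_mat_vec[THEN trans, OF dim_row_proj_onto]] of_real_proj_weight
    by (simp add: cinner_nth_proj_onto)
qed

lemma vnorm_proj_onto_sq: "(vnorm (proj_onto d bs *\<^sub>v v))\<^sup>2 = proj_weight bs v"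
  by (metis cinner_proj_onto_self(3) cinner_self of_real_eq_iff)

lemma cinner_diff_smult_proj_onto:
  "cinner (v - a \<cdot>\<^sub>v (proj_onto d bs *\<^sub>v v)) (v - a \<cdot>\<^sub>v (proj_onto d bs *\<^sub>v v))
     = cinner v v - (a + cnj a - cnj a * a) * of_real (proj_weight bs v)"
proof -
  have "dim_vec (proj_onto d bs *\<^sub>v v) = dim_vec v"
    using dim_v by simp
  then show ?thesis
    by (simp only: cinner_diff_smult cinner_proj_onto_self) (simp add: algebra_simps)
qed

lemma proj_weight_le: "proj_weight bs v \<le> (vnorm v)\<^sup>2"
proof -
  have "of_real ((vnorm (v - 1 \<cdot>\<^sub>v (proj_onto d bs *\<^sub>v v)))\<^sup>2) = cinner v v - of_real (proj_weight bs v)"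
    unfolding cinner_self[symmetric] cinner_diff_smult_proj_onto by simp
  also have "\<dots> = of_real ((vnorm v)\<^sup>2 - proj_weight bs v)"
    by (simp add: cinner_self del: of_real_power)
  finally show ?thesis
    by (metis diff_ge_0_iff_ge of_real_eq_iff zero_le_power2)
qed

lemma vnorm_reflect: "vnorm (v - 2 \<cdot>\<^sub>v (proj_onto d bs *\<^sub>v v)) = vnorm v"
  unfolding vnorm_eq_iff_cinner_self cinner_diff_smult_proj_onto by simp

end

lemma proj_weight_blocks:
  assumes "length bs = q * c"
  shows "(\<Sum>m<q. proj_weight (map ((!) bs) [m * c..<m * c + c]) v) = proj_weight bs v"
  unfolding proj_weight_def assms sum_lessThan_mult_split by simp

lemma refl_oracle_carrier [simp]: "refl_oracle d bs \<in> carrier_mat d d"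
  unfolding refl_oracle_def proj_onto_def by (intro minus_carrier_mat smult_carrier_mat mat_carrier)

lemma state_oracle_carrier [simp]: "state_oracle d \<psi> \<in> carrier_mat d d"
  by (simp add: state_oracle_def)

lemma dim_row_refl_oracle [simp]: "dim_row (refl_oracle d bs) = d"
  by (simp add: refl_oracle_def)

lemma refl_oracle_mult_vec:
  assumes "dim_vec v = d"
  shows "refl_oracle d bs *\<^sub>v v = v - 2 \<cdot>\<^sub>v (proj_onto d bs *\<^sub>v v)"
  using assms unfolding refl_oracle_def
  by (intro eq_vecI) (auto simp: proj_onto_def scalar_prod_def sum_subtractf
      sum_distrib_left algebra_simps atLeast0LessThan if_distrib[of "(*) _"] cong: if_cong)

lemma vnorm_refl_oracle:
  "orthonormal_list d bs \<Longrightarrow> dim_vec v = d \<Longrightarrow> vnorm (refl_oracle d bs *\<^sub>v v) = vnorm v"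
  by (simp add: refl_oracle_mult_vec vnorm_reflect)

lemma state_oracle_minus_refl_oracle_Cons:
  assumes "dim_vec v = d"
  shows "state_oracle d \<psi> *\<^sub>v v - refl_oracle d (\<psi> # bs) *\<^sub>v v = 2 \<cdot>\<^sub>v (proj_onto d bs *\<^sub>v v)"
  using assms unfolding state_oracle_def
  by (intro eq_vecI) (simp_all add: refl_oracle_mult_vec proj_onto_mult_vec sum.lessThan_Suc_shift
      del: sum.lessThan_Suc)

section \<open>Extending a unit vector to an orthonormal basis\<close>

lemma col_state_oracle:
  assumes "dim_vec w = d" "k < d"
  shows "col (state_oracle d w) k = unit_vec d k - (2 * cnj (w $ k)) \<cdot>\<^sub>v w"
  using assms unfolding state_oracle_def refl_oracle_def proj_onto_def
  by (intro eq_vecI) auto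

lemma orthonormal_list_state_oracle_columns:
  assumes w: "dim_vec w = d" "vnorm w = 1"
  shows "orthonormal_list d (map (col (state_oracle d w)) [0..<d])"
  unfolding orthonormal_list_def
proof (intro conjI ballI allI impI)
  fix k l assume "k < length (map (col (state_oracle d w)) [0..<d])"
    and "l < length (map (col (state_oracle d w)) [0..<d])"
  then have kl: "k < d" "l < d" by simp_all
  have "cinner (map (col (state_oracle d w)) [0..<d] ! k) (map (col (state_oracle d w)) [0..<d] ! l)
      = cinner (unit_vec d k - (2 * cnj (w $ k)) \<cdot>\<^sub>v w) (unit_vec d l - (2 * cnj (w $ l)) \<cdot>\<^sub>v w)"
    using kl w(1) by (simp add: col_state_oracle)
  also have "\<dots> = cinner (unit_vec d k) (unit_vec d l) - 2 * cnj (w $ l) * w $ k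
      - 2 * w $ k * cnj (w $ l) + 4 * w $ k * cnj (w $ l) * cinner w w"
    using kl w(1) cinner_unit_vec_left[of k w]
    by (simp add: cinner_diff_smult cinner_unit_vec_right)
  also have "cinner (unit_vec d k) (unit_vec d l) = (if k = l then 1 else 0)"
    using kl cinner_unit_vec_left[of k "unit_vec d l"] by simp
  also have "cinner w w = 1"
    using w(2) by (simp add: cinner_self)
  finally show "cinner (map (col (state_oracle d w)) [0..<d] ! k) (map (col (state_oracle d w)) [0..<d] ! l)
      = (if k = l then 1 else 0)"
    by (simp add: algebra_simps)
qed (use w in \<open>auto simp: state_oracle_def refl_oracle_def\<close>)

lemma exists_phase: "\<exists>u. cnj u * u = 1 \<and> z = u * of_real (cmod z)"
proof (cases "z = 0")
  case False
  have "cnj (sgn z) * sgn z = 1"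
    by (metis complex_norm_square mult.commute norm_sgn of_real_1 power_one False)
  moreover have "z = sgn z * of_real (cmod z)"
    using False by (simp add: sgn_div_norm scaleR_conv_of_real)
  ultimately show ?thesis
    by blast
qed (intro exI[of _ 1], simp)

(* The reflection along the unit vector w parallel to \<psi> + u e_0: the phase u makes
   \<langle>u e_0, \<psi>\<rangle> = |\<psi>_0| real, so the reflection maps e_0 to -(cnj u) \<psi>. *)
lemma householder_first_column:
  assumes psi: "dim_vec \<psi> = d" "vnorm \<psi> = 1" "0 < d"
    and u: "cnj u * u = 1" "\<psi> $ 0 = u * of_real (cmod (\<psi> $ 0))"
  shows "\<exists>w. dim_vec w = d \<and> vnorm w = 1 \<and> col (state_oracle d w) 0 = (- cnj u) \<cdot>\<^sub>v \<psi>"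
proof -
  define a where "a = cmod (\<psi> $ 0)"
  have ua: "\<psi> $ 0 = u * of_real a"
    using u(2) unfolding a_def .
  define r where "r = sqrt (2 + 2 * a)"
  have rr: "r * r = 2 + 2 * a" and "r > 0"
    unfolding r_def a_def by (simp_all add: add_pos_nonneg)
  have r: "r > 0" "complex_of_real r * of_real r = 2 + 2 * of_real a"
    using \<open>r > 0\<close> arg_cong[OF rr, of complex_of_real] by simp_all
  define x where "x = \<psi> - (- u) \<cdot>\<^sub>v unit_vec d 0"
  define w where "w = (1 / of_real r) \<cdot>\<^sub>v x"
  have x: "x $ i = \<psi> $ i + (if i = 0 then u else 0)" if "i < d" for i
    using that psi(1) unfolding x_def by simp
  have "cinner x x = 2 + 2 * of_real a"
  proof -
    have "cnj u * \<psi> $ 0 = of_real a"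
      using u(1) ua by (simp add: mult.assoc[symmetric])
    moreover from this have "u * cnj (\<psi> $ 0) = of_real a"
      by (metis complex_cnj_cnj complex_cnj_mult complex_cnj_complex_of_real)
    moreover have "cinner \<psi> \<psi> = 1"
      using psi(2) by (simp add: cinner_self)
    ultimately show ?thesis
      using psi(1,3) cinner_unit_vec_left[of 0 \<psi>] cinner_unit_vec_right[of 0 d \<psi>] u(1)
        cinner_unit_vec_left[of 0 "unit_vec d 0"]
      unfolding x_def by (simp add: cinner_diff_smult algebra_simps)
  qed
  moreover have "cinner w w = cinner x x / (of_real r * of_real r)"
    using psi(1) unfolding w_def x_def by (simp add: cinner_smult_left cinner_smult_right)
  ultimately have "cinner w w = 1"
    using r unfolding r(2)[symmetric] by simp
  then have "(vnorm w)\<^sup>2 = 1"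
    by (metis cinner_self of_real_eq_1_iff)
  then have w: "dim_vec w = d" "vnorm w = 1"
    using psi(1) vnorm_nonneg[of w] power2_eq_1_iff unfolding w_def x_def by force+
  have "2 * cnj (w $ 0) = cnj u * of_real r"
  proof -
    have "w $ 0 = u * (1 + of_real a) / of_real r"
      using x[of 0] psi ua unfolding w_def x_def by (simp add: algebra_simps add_divide_distrib)
    then have "2 * cnj (w $ 0) = cnj u * (2 + 2 * of_real a) / of_real r"
      by simp
    also have "\<dots> = cnj u * of_real r"
      using r(1) unfolding r(2)[symmetric] by simp
    finally show ?thesis .
  qed
  have "col (state_oracle d w) 0 = (- cnj u) \<cdot>\<^sub>v \<psi>"
  proof (rule eq_vecI)
    fix i assume "i < dim_vec ((- cnj u) \<cdot>\<^sub>v \<psi>)"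
    then have i: "i < d" using psi(1) by simp
    have "col (state_oracle d w) 0 $ i = (if i = 0 then 1 else 0) - 2 * cnj (w $ 0) * w $ i"
      using i psi(3) w(1) by (simp add: col_state_oracle)
    also have "\<dots> = (if i = 0 then 1 else 0) - cnj u * (of_real r * w $ i)"
      unfolding \<open>2 * cnj (w $ 0) = cnj u * of_real r\<close> by (simp only: mult.assoc)
    also have "of_real r * w $ i = x $ i"
      using i r(1) psi(1) unfolding w_def x_def by simp
    finally show "col (state_oracle d w) 0 $ i = ((- cnj u) \<cdot>\<^sub>v \<psi>) $ i"
      using i psi(1) u(1) by (simp add: x distrib_left)
  qed (use psi w in \<open>simp add: state_oracle_def refl_oracle_def\<close>)
  with w show ?thesis
    by blast
qed

lemma orthonormal_list_extend:
  assumes psi: "dim_vec \<psi> = d" "vnorm \<psi> = 1"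
  shows "\<exists>bs. orthonormal_list d (\<psi> # bs) \<and> length bs = d - 1"
proof -
  have "0 < d"
    using psi by (cases d) (auto simp: vnorm_def)
  obtain u where u: "cnj u * u = 1" "\<psi> $ 0 = u * of_real (cmod (\<psi> $ 0))"
    using exists_phase by blast
  obtain w where w: "dim_vec w = d" "vnorm w = 1" and col0: "col (state_oracle d w) 0 = (- cnj u) \<cdot>\<^sub>v \<psi>"
    using householder_first_column[OF psi \<open>0 < d\<close> u] by blast
  have "orthonormal_list d (col (state_oracle d w) 0 # map (col (state_oracle d w)) [1..<d])"
    using orthonormal_list_state_oracle_columns[OF w] \<open>0 < d\<close> by (simp add: upt_conv_Cons)
  moreover have "cnj (- u) * - u = 1"
    using u(1) by simp
  ultimately have "orthonormal_list d (((- u) \<cdot>\<^sub>v ((- cnj u) \<cdot>\<^sub>v \<psi>)) # map (col (state_oracle d w)) [1..<d])"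
    unfolding col0 by (rule orthonormal_list_Cons_smult)
  moreover have "(- u) \<cdot>\<^sub>v ((- cnj u) \<cdot>\<^sub>v \<psi>) = \<psi>"
    using u(1) by (simp add: smult_smult_assoc mult.commute)
  ultimately show ?thesis
    by auto
qed

(* The component of x \<in> C^N \<otimes> C^W along the j-th workspace basis vector, in the index
   convention of lift_oracle. *)
definition query_slice :: "nat \<Rightarrow> nat \<Rightarrow> complex vec \<Rightarrow> nat \<Rightarrow> complex vec" where
  "query_slice N W x j = vec N (\<lambda>i. x $ (i * W + j))"

lemma dim_query_slice [simp]: "dim_vec (query_slice N W x j) = N"
  by (simp add: query_slice_def)

lemma vnorm_sq_query_slices:
  assumes "dim_vec x = N * W"
  shows "(vnorm x)\<^sup>2 = (\<Sum>j<W. (vnorm (query_slice N W x j))\<^sup>2)"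
  unfolding vnorm_sq assms sum_lessThan_mult_split query_slice_def
  by (subst sum.swap) simp

lemma query_slice_minus:
  assumes "dim_vec x = N * W" "dim_vec y = N * W" "j < W"
  shows "query_slice N W (x - y) j = query_slice N W x j - query_slice N W y j"
proof -
  have "i * W + j < N * W" if "i < N" for i
  proof -
    have "i * W + j < (i + 1) * W" using assms(3) by simp
    also have "\<dots> \<le> N * W" using that by (intro mult_le_mono1) simp
    finally show ?thesis .
  qed
  then show ?thesis
    using assms unfolding query_slice_def by (intro eq_vecI) simp_all
qed

lemma dim_row_lift_oracle [simp]: "dim_row (lift_oracle n w Orc) = 2^n * 2^w"
  by (simp add: lift_oracle_def)

lemma lift_oracle_carrier [simp]: "lift_oracle n w Orc \<in> carrier_mat (2^n * 2^w) (2^n * 2^w)"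
  by (simp add: lift_oracle_def)

lemma query_slice_lift_oracle:
  assumes "Orc \<in> carrier_mat (2^n) (2^n)" "dim_vec x = 2^n * 2^w" "j < 2^w"
  shows "query_slice (2^n) (2^w) (lift_oracle n w Orc *\<^sub>v x) j = Orc *\<^sub>v query_slice (2^n) (2^w) x j"
proof (rule eq_vecI)
  fix i assume "i < dim_vec (Orc *\<^sub>v query_slice (2^n) (2^w) x j)"
  then have i: "i < 2^n" using assms(1) by simp
  have "i * 2^w + j < (i + 1) * 2^w"
    using assms(3) by simp
  also have "\<dots> \<le> 2^n * 2^w"
    using i by (intro mult_le_mono1) simp
  finally have k: "i * 2^w + j < 2^n * 2^w" .
  have "(lift_oracle n w Orc *\<^sub>v x) $ (i * 2^w + j) = (\<Sum>k'<2^n * 2^w.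
      (if (i * 2^w + j) mod 2^w = k' mod 2^w then Orc $$ ((i * 2^w + j) div 2^w, k' div 2^w) else 0) * x $ k')"
    using k assms(2) unfolding lift_oracle_def by (simp add: scalar_prod_def atLeast0LessThan)
  also have "\<dots> = (\<Sum>i'<2^n. \<Sum>j'<2^w. (if j = j' then Orc $$ (i, i') else 0) * x $ (i' * 2^w + j'))"
    unfolding sum_lessThan_mult_split using assms(3) by (intro sum.cong refl) simp
  also have "\<dots> = (\<Sum>i'<2^n. Orc $$ (i, i') * x $ (i' * 2^w + j))"
    using assms(3) by (simp add: if_distrib[of "\<lambda>c. c * _"] cong: if_cong)
  finally show "query_slice (2^n) (2^w) (lift_oracle n w Orc *\<^sub>v x) j $ i
      = (Orc *\<^sub>v query_slice (2^n) (2^w) x j) $ i"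
    using i assms(1) unfolding query_slice_def by (simp add: scalar_prod_def atLeast0LessThan)
qed (use assms in \<open>simp add: query_slice_def\<close>)

lemma vnorm_lift_refl_oracle:
  assumes "orthonormal_list (2^n) bs" "dim_vec x = 2^n * 2^w"
  shows "vnorm (lift_oracle n w (refl_oracle (2^n) bs) *\<^sub>v x) = vnorm x"
proof -
  have "(vnorm (lift_oracle n w (refl_oracle (2^n) bs) *\<^sub>v x))\<^sup>2
      = (\<Sum>j<2^w. (vnorm (refl_oracle (2^n) bs *\<^sub>v query_slice (2^n) (2^w) x j))\<^sup>2)"
    using assms(2) by (simp add: vnorm_sq_query_slices query_slice_lift_oracle)
  also have "\<dots> = (vnorm x)\<^sup>2"
    using assms by (simp add: vnorm_refl_oracle vnorm_sq_query_slices)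
  finally show ?thesis
    by (simp add: vnorm_nonneg power2_eq_iff_nonneg)
qed

(* The squared norm |(\<Pi>_bs \<otimes> 1) x|^2 of the part of x lying in span bs \<otimes> C^(2^w). *)
definition slice_weight :: "nat \<Rightarrow> nat \<Rightarrow> complex vec list \<Rightarrow> complex vec \<Rightarrow> real" where
  "slice_weight n w bs x = (\<Sum>j<2^w. proj_weight bs (query_slice (2^n) (2^w) x j))"

lemma slice_weight_nonneg: "0 \<le> slice_weight n w bs x"
  unfolding slice_weight_def by (simp add: sum_nonneg proj_weight_nonneg)

lemma vnorm_lift_state_oracle_minus_refl_oracle:
  assumes ortho: "orthonormal_list (2^n) (\<psi> # bs)" and x: "dim_vec x = 2^n * 2^w"
  shows "vnorm (lift_oracle n w (state_oracle (2^n) \<psi>) *\<^sub>v x - lift_oracle n w (refl_oracle (2^n) (\<psi> # bs)) *\<^sub>v x)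
    = 2 * sqrt (slice_weight n w bs x)"
proof -
  let ?S = "query_slice (2^n) (2^w) x"
  let ?D = "lift_oracle n w (state_oracle (2^n) \<psi>) *\<^sub>v x - lift_oracle n w (refl_oracle (2^n) (\<psi> # bs)) *\<^sub>v x"
  have "(vnorm ?D)\<^sup>2 = (\<Sum>j<2^w. (vnorm (query_slice (2^n) (2^w) ?D j))\<^sup>2)"
    by (rule vnorm_sq_query_slices) simp
  also have "\<dots> = (\<Sum>j<2^w. (vnorm (state_oracle (2^n) \<psi> *\<^sub>v ?S j - refl_oracle (2^n) (\<psi> # bs) *\<^sub>v ?S j))\<^sup>2)"
    using x by (intro sum.cong refl) (simp add: query_slice_minus query_slice_lift_oracle)
  also have "\<dots> = (\<Sum>j<2^w. 4 * proj_weight bs (?S j))"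
    using orthonormal_list_ConsD[OF ortho]
    by (intro sum.cong refl)
      (simp add: state_oracle_minus_refl_oracle_Cons vnorm_smult power_mult_distrib vnorm_proj_onto_sq)
  also have "\<dots> = 4 * slice_weight n w bs x"
    by (simp add: slice_weight_def sum_distrib_left)
  finally have "sqrt (4 * slice_weight n w bs x) = vnorm ?D"
    using real_sqrt_unique vnorm_nonneg by blast
  then show ?thesis
    by (simp add: real_sqrt_mult)
qed

lemma sum_slice_weight_blocks_le:
  assumes ortho: "orthonormal_list (2^n) bs" and len: "length bs = q * c"
    and y: "dim_vec y = 2^n * 2^w"
  shows "(\<Sum>m<q. slice_weight n w (map ((!) bs) [m * c..<m * c + c]) y) \<le> (vnorm y)\<^sup>2"
proof -
  let ?S = "query_slice (2^n) (2^w) y"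
  have "(\<Sum>m<q. slice_weight n w (map ((!) bs) [m * c..<m * c + c]) y)
      = (\<Sum>j<2^w. \<Sum>m<q. proj_weight (map ((!) bs) [m * c..<m * c + c]) (?S j))"
    unfolding slice_weight_def by (rule sum.swap)
  also have "\<dots> = (\<Sum>j<2^w. proj_weight bs (?S j))"
    using len by (simp add: proj_weight_blocks)
  also have "\<dots> \<le> (\<Sum>j<2^w. (vnorm (?S j))\<^sup>2)"
    by (intro sum_mono proj_weight_le[OF ortho]) simp
  also have "\<dots> = (vnorm y)\<^sup>2"
    using y by (simp add: vnorm_sq_query_slices)
  finally show ?thesis .
qed

section \<open>The hybrid argument\<close>

fun query_states :: "complex mat \<Rightarrow> complex mat list \<Rightarrow> complex vec \<Rightarrow> complex vec list" where
  "query_states Oe [] x = []"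
| "query_states Oe (U # Us) x = x # query_states Oe Us (U *\<^sub>v (Oe *\<^sub>v x))"

lemma length_query_states [simp]: "length (query_states Oe Us x) = length Us"
  by (induction Us arbitrary: x) auto

lemma query_states_vnorm:
  assumes "\<forall>U\<in>set Us. unitary_mat d U" "Oe \<in> carrier_mat d d"
    and "\<And>y. dim_vec y = d \<Longrightarrow> vnorm (Oe *\<^sub>v y) = vnorm y"
    and "dim_vec x = d" "y \<in> set (query_states Oe Us x)"
  shows "dim_vec y = d \<and> vnorm y = vnorm x"
  using assms
proof (induction Us arbitrary: x)
  case (Cons U Us)
  then have U: "unitary_mat d U" by simp
  have "dim_vec (Oe *\<^sub>v x) = d"
    using Cons.prems(2,4) by simp
  then have "vnorm (U *\<^sub>v (Oe *\<^sub>v x)) = vnorm x"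
    using U Cons.prems(3,4) by (simp add: vnorm_mult_vec_unitary)
  moreover have "dim_vec (U *\<^sub>v (Oe *\<^sub>v x)) = d"
    using U by (simp add: dim_row_unitary)
  moreover have "y = x \<or> y \<in> set (query_states Oe Us (U *\<^sub>v (Oe *\<^sub>v x)))"
    using Cons.prems(5) by simp
  ultimately show ?case
    using Cons.IH[of "U *\<^sub>v (Oe *\<^sub>v x)"] Cons.prems by auto
qed simp

lemma vnorm_run_alg_diff_le:
  assumes Us: "\<forall>U\<in>set Us. unitary_mat d U"
    and Oe: "Oe \<in> carrier_mat d d" and Oe': "Oe' \<in> carrier_mat d d"
    and isometry: "\<And>y. dim_vec y = d \<Longrightarrow> vnorm (Oe' *\<^sub>v y) = vnorm y"
    and x: "dim_vec x = d" "dim_vec x' = d"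
  shows "vnorm (run_alg Oe Us x - run_alg Oe' Us x')
    \<le> vnorm (x - x') + (\<Sum>y\<leftarrow>query_states Oe Us x. vnorm (Oe *\<^sub>v y - Oe' *\<^sub>v y))"
  using Us x
proof (induction Us arbitrary: x x')
  case (Cons U Us)
  have U: "unitary_mat d U"
    using Cons.prems(1) by simp
  then have U_carrier: "U \<in> carrier_mat d d"
    by (rule unitary_mat_carrier)
  have carrier: "x \<in> carrier_vec d" "x' \<in> carrier_vec d"
    "Oe *\<^sub>v x \<in> carrier_vec d" "Oe' *\<^sub>v x' \<in> carrier_vec d" "Oe' *\<^sub>v x \<in> carrier_vec d"
    using Cons.prems(2,3) Oe Oe' by (auto intro: carrier_vecI)
  have "vnorm (run_alg Oe (U # Us) x - run_alg Oe' (U # Us) x')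
      \<le> vnorm (U *\<^sub>v (Oe *\<^sub>v x) - U *\<^sub>v (Oe' *\<^sub>v x'))
        + (\<Sum>y\<leftarrow>query_states Oe Us (U *\<^sub>v (Oe *\<^sub>v x)). vnorm (Oe *\<^sub>v y - Oe' *\<^sub>v y))"
    using Cons.prems U_carrier by (simp add: Cons.IH)
  also have "vnorm (U *\<^sub>v (Oe *\<^sub>v x) - U *\<^sub>v (Oe' *\<^sub>v x')) = vnorm (Oe *\<^sub>v x - Oe' *\<^sub>v x')"
    using carrier U U_carrier carrier_matD[OF Oe']
    by (simp add: mult_minus_distrib_mat_vec[symmetric] vnorm_mult_vec_unitary)
  also have "\<dots> \<le> vnorm (Oe *\<^sub>v x - Oe' *\<^sub>v x) + vnorm (Oe' *\<^sub>v x - Oe' *\<^sub>v x')"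
    using Oe Oe' by (intro vnorm_diff_triangle[of _ d]) simp_all
  also have "vnorm (Oe' *\<^sub>v x - Oe' *\<^sub>v x') = vnorm (x - x')"
    using carrier Oe' isometry by (simp add: mult_minus_distrib_mat_vec[symmetric])
  finally show ?case
    by simp
qed (simp add: vnorm_def)

lemma query_states_unit:
  assumes U0: "unitary_mat (2^n * 2^w) U0" and Us: "\<forall>U\<in>set Us. unitary_mat (2^n * 2^w) U"
    and init: "dim_vec init = 2^n * 2^w" "vnorm init = 1" and ortho: "orthonormal_list (2^n) [\<psi>]"
  shows "\<forall>y\<in>set (query_states (lift_oracle n w (state_oracle (2^n) \<psi>)) Us (U0 *\<^sub>v init)).
    dim_vec y = 2^n * 2^w \<and> vnorm y = 1"
proof -
  have x0: "dim_vec (U0 *\<^sub>v init) = 2^n * 2^w" "vnorm (U0 *\<^sub>v init) = 1"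
    using U0 init by (simp_all add: dim_row_unitary vnorm_mult_vec_unitary)
  have iso: "vnorm (lift_oracle n w (state_oracle (2^n) \<psi>) *\<^sub>v y) = vnorm y" if "dim_vec y = 2^n * 2^w" for y
    using ortho that unfolding state_oracle_def by (simp add: vnorm_lift_refl_oracle)
  show ?thesis
    using query_states_vnorm[OF Us lift_oracle_carrier iso x0(1)] x0(2) by simp
qed

lemma sum_list_sqrt_le:
  assumes "\<forall>y\<in>set ys. 0 \<le> f y"
  shows "(\<Sum>y\<leftarrow>ys. sqrt (f y)) \<le> sqrt (real (length ys) * (\<Sum>y\<leftarrow>ys. f y))"
proof -
  let ?n = "length ys"
  have "(\<Sum>y\<leftarrow>ys. sqrt (f y)) = (\<Sum>i<?n. \<bar>1\<bar> * \<bar>sqrt (f (ys ! i))\<bar>)"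
    using assms by (simp add: sum_list_sum_nth atLeast0LessThan)
  also have "\<dots> \<le> L2_set (\<lambda>_. 1) {..<?n} * L2_set (\<lambda>i. sqrt (f (ys ! i))) {..<?n}"
    by (rule L2_set_mult_ineq)
  also have "L2_set (\<lambda>i. sqrt (f (ys ! i))) {..<?n} = sqrt (\<Sum>y\<leftarrow>ys. f y)"
    using assms unfolding L2_set_def by (simp add: sum_list_sum_nth atLeast0LessThan)
  finally show ?thesis
    by (simp add: L2_set_def real_sqrt_mult)
qed

lemma final_state_distance_le:
  assumes U0: "unitary_mat (2^n * 2^w) U0" and Us: "\<forall>U\<in>set Us. unitary_mat (2^n * 2^w) U"
    and init: "dim_vec init = 2^n * 2^w" and ortho: "orthonormal_list (2^n) (\<psi> # bs)"
  defines "ys \<equiv> query_states (lift_oracle n w (state_oracle (2^n) \<psi>)) Us (U0 *\<^sub>v init)"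
  shows "vnorm (final_state n w U0 Us (state_oracle (2^n) \<psi>) init
      - final_state n w U0 Us (refl_oracle (2^n) (\<psi> # bs)) init)
    \<le> 2 * sqrt (real (length Us) * (\<Sum>y\<leftarrow>ys. slice_weight n w bs y))"
proof -
  let ?O = "lift_oracle n w (state_oracle (2^n) \<psi>)"
  let ?O' = "lift_oracle n w (refl_oracle (2^n) (\<psi> # bs))"
  have x0: "dim_vec (U0 *\<^sub>v init) = 2^n * 2^w"
    using U0 init by (simp add: dim_row_unitary)
  have "orthonormal_list (2^n) [\<psi>]"
    using orthonormal_list_Cons_block[OF ortho, of 0 0] by simp
  then have ys: "dim_vec y = 2^n * 2^w" if "y \<in> set ys" for y
    using query_states_vnorm[OF Us lift_oracle_carrier _ x0 that[unfolded ys_def]]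
    by (simp add: state_oracle_def vnorm_lift_refl_oracle)
  have "vnorm (final_state n w U0 Us (state_oracle (2^n) \<psi>) init
      - final_state n w U0 Us (refl_oracle (2^n) (\<psi> # bs)) init)
      \<le> vnorm (U0 *\<^sub>v init - U0 *\<^sub>v init) + (\<Sum>y\<leftarrow>ys. vnorm (?O *\<^sub>v y - ?O' *\<^sub>v y))"
    unfolding final_state_def ys_def
    using ortho by (intro vnorm_run_alg_diff_le[OF Us] x0) (simp_all add: vnorm_lift_refl_oracle)
  also have "vnorm (U0 *\<^sub>v init - U0 *\<^sub>v init) = 0"
    unfolding vnorm_def by simp
  also have "(\<Sum>y\<leftarrow>ys. vnorm (?O *\<^sub>v y - ?O' *\<^sub>v y)) = (\<Sum>y\<leftarrow>ys. 2 * sqrt (slice_weight n w bs y))"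
    using ys ortho by (intro arg_cong[of _ _ sum_list] map_cong refl)
      (simp add: vnorm_lift_state_oracle_minus_refl_oracle)
  also have "\<dots> = 2 * (\<Sum>y\<leftarrow>ys. sqrt (slice_weight n w bs y))"
    by (simp add: sum_list_const_mult)
  also have "\<dots> \<le> 2 * sqrt (real (length Us) * (\<Sum>y\<leftarrow>ys. slice_weight n w bs y))"
    using sum_list_sqrt_le[of ys "slice_weight n w bs"] by (simp add: ys_def slice_weight_nonneg)
  finally show ?thesis
    by simp
qed

section \<open>Choice of the subspace\<close>

lemma orthonormal_list_extend_blocks:
  assumes "even n" "dim_vec \<psi> = 2^n" "vnorm \<psi> = 1"
  shows "\<exists>rest. orthonormal_list (2^n) (\<psi> # rest)
    \<and> length rest = (2^(n div 2) + 1) * (2^(n div 2) - 1)"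
proof -
  define D :: nat where "D = 2 ^ (n div 2)"
  have "2^n = D * D"
    using \<open>even n\<close> unfolding D_def by (auto simp: power_add[symmetric] elim!: evenE)
  then have "2^n - 1 = (D + 1) * (D - 1)"
    by (cases D) (simp_all add: algebra_simps)
  then show ?thesis
    unfolding D_def
    using orthonormal_list_extend[OF assms(2,3)] by simp
qed

lemma exists_le_average:
  fixes f :: "'a \<Rightarrow> real"
  assumes "finite A" "A \<noteq> {}"
  shows "\<exists>a\<in>A. f a \<le> sum f A / card A"
proof (rule ccontr)
  assume "\<not> ?thesis"
  then have "(\<Sum>a\<in>A. sum f A / card A) < sum f A"
    using assms by (intro sum_strict_mono) auto
  then show False
    using assms by simp
qed

lemma exists_light_block:
  assumes ortho: "orthonormal_list (2^n) bs" and len: "length bs = q * c" and "0 < q"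
    and ys: "\<forall>y\<in>set ys. dim_vec y = 2^n * 2^w \<and> vnorm y = 1"
  shows "\<exists>m<q. (\<Sum>y\<leftarrow>ys. slice_weight n w (map ((!) bs) [m * c..<m * c + c]) y) \<le> length ys / q"
proof -
  let ?f = "\<lambda>m. \<Sum>y\<leftarrow>ys. slice_weight n w (map ((!) bs) [m * c..<m * c + c]) y"
  have "(\<Sum>m<q. ?f m) = (\<Sum>y\<leftarrow>ys. \<Sum>m<q. slice_weight n w (map ((!) bs) [m * c..<m * c + c]) y)"
    by (induction ys) (simp_all add: sum.distrib)
  also have "\<dots> \<le> (\<Sum>y\<leftarrow>ys. 1)"
    using ys sum_slice_weight_blocks_le[OF ortho len] by (intro sum_list_mono) fastforce
  finally have "(\<Sum>m<q. ?f m) / card {..<q} \<le> length ys / q"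
    using \<open>0 < q\<close> by (simp add: sum_list_triv divide_right_mono)
  then show ?thesis
    using exists_le_average[of "{..<q}" ?f] \<open>0 < q\<close> by fastforce
qed

lemma sqrt_mult_div_le_powr_sixth:
  fixes p :: real
  assumes "even n" "0 \<le> p"
  shows "sqrt (p * (p / (2 ^ (n div 2) + 1))) \<le> p * 2 powr (- real n / 6)"
proof -
  obtain k where k: "n = 2 * k"
    using assms(1) by (rule evenE)
  have "(2::real) powr (real n / 6) \<le> 2 powr (real k / 2)"
    unfolding k by (intro powr_mono) auto
  also have "(2::real) powr (real k / 2) = sqrt (2 ^ (n div 2))"
    unfolding k by (simp add: powr_half_sqrt[symmetric] powr_powr powr_realpow[symmetric])
  also have "\<dots> \<le> sqrt (2 ^ (n div 2) + 1)"
    by simp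
  finally have le: "2 powr (real n / 6) \<le> sqrt (2 ^ (n div 2) + 1)" .
  have "sqrt (p * (p / (2 ^ (n div 2) + 1))) = p / sqrt (2 ^ (n div 2) + 1)"
    using assms(2) by (simp add: real_sqrt_mult real_sqrt_divide)
  also have "\<dots> \<le> p / 2 powr (real n / 6)"
    by (rule divide_left_mono[OF le assms(2)]) (simp add: add_pos_nonneg)
  also have "\<dots> = p * 2 powr (- real n / 6)"
    by (simp add: powr_minus_divide)
  finally show ?thesis .
qed

theorem mainTheorem4:
  fixes n w :: nat and U0 :: "complex mat" and Us :: "complex mat list"
    and init \<psi> :: "complex vec"
  assumes "even n"
    and "unitary_mat (2^n * 2^w) U0"
    and "\<forall>U\<in>set Us. unitary_mat (2^n * 2^w) U"
    and "init \<in> carrier_vec (2^n * 2^w)" and "vnorm init = 1"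
    and "\<psi> \<in> carrier_vec (2^n)" and "vnorm \<psi> = 1"
  shows "\<exists>bs. orthonormal_list (2^n) bs \<and> length bs = 2^(n div 2) \<and> in_span \<psi> bs \<and>
           vnorm (final_state n w U0 Us (state_oracle (2^n) \<psi>) init
                  - final_state n w U0 Us (refl_oracle (2^n) bs) init)
             \<le> 2 * real (length Us) * 2 powr (- real n / 6)"
proof -
  define D :: nat where "D = 2 ^ (n div 2)"
  obtain rest where rest: "orthonormal_list (2^n) (\<psi> # rest)"
    and len: "length rest = (D + 1) * (D - 1)"
    using orthonormal_list_extend_blocks[OF \<open>even n\<close> carrier_vecD[OF assms(6)] assms(7)]
    unfolding D_def by blast
  define ys where "ys = query_states (lift_oracle n w (state_oracle (2^n) \<psi>)) Us (U0 *\<^sub>v init)"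
  have unit: "\<forall>y\<in>set ys. dim_vec y = 2^n * 2^w \<and> vnorm y = 1"
    using query_states_unit[OF assms(2,3) carrier_vecD[OF assms(4)] assms(5)]
      orthonormal_list_Cons_block[OF rest, of 0 0] unfolding ys_def by simp
  obtain m where "m < D + 1"
    and light: "(\<Sum>y\<leftarrow>ys. slice_weight n w (map ((!) rest) [m * (D - 1)..<m * (D - 1) + (D - 1)]) y)
      \<le> length Us / (D + 1)"
    using exists_light_block[OF orthonormal_list_ConsD[OF rest] len _ unit] by (auto simp: ys_def)
  let ?S = "\<psi> # map ((!) rest) [m * (D - 1)..<m * (D - 1) + (D - 1)]"
  have "m * (D - 1) + (D - 1) \<le> length rest"
    using \<open>m < D + 1\<close> len by (simp add: add_mult_distrib[symmetric])
  then have ortho: "orthonormal_list (2^n) ?S"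
    by (rule orthonormal_list_Cons_block[OF rest])
  have "vnorm (final_state n w U0 Us (state_oracle (2^n) \<psi>) init
        - final_state n w U0 Us (refl_oracle (2^n) ?S) init)
      \<le> 2 * sqrt (length Us *
        (\<Sum>y\<leftarrow>ys. slice_weight n w (map ((!) rest) [m * (D - 1)..<m * (D - 1) + (D - 1)]) y))"
    using final_state_distance_le[OF assms(2,3) carrier_vecD[OF assms(4)] ortho] unfolding ys_def .
  also have "\<dots> \<le> 2 * sqrt (length Us * (length Us / (2 ^ (n div 2) + 1)))"
    using light unfolding D_def by (intro mult_left_mono real_sqrt_le_mono) (simp_all add: add.commute)
  also have "\<dots> \<le> 2 * real (length Us) * 2 powr (- real n / 6)"
    using sqrt_mult_div_le_powr_sixth[OF \<open>even n\<close>, of "length Us"] by simp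
  finally show ?thesis
    using ortho in_span_Cons unfolding D_def by fastforce
qed

end
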